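(* Let $\mathsf{V}$ be the subvariety of $V(\mathsf{BCA})$ axiomatised, relative to $V(\mathsf{BCA})$, by $J_2\neg x\approx\neg J_2x$. Then every $\mathbf{A}\in\mathsf{V}$ embeds into a direct product $\mathbf{B}\times\mathbf{C}$ for some $\mathbf{B}\in\mathsf{BA}$ and some $\mathbf{C}\in\mathsf{SL}$.
   Context: $\mathbf{WK}^e$ is the three-element algebra on $\{0,\tfrac12,1\}$ of type $\langle\wedge,\vee,\neg,J_2,0,1\rangle$. Its operations are: - $\neg$ swaps $0,1$ and fixes $\tfrac12$; - $\wedge,\vee$ are Boolean on $\{0,1\}$ and return $\tfrac12$ if some argument is $\tfrac12$; - $J_2(1)=1$ and $J_2(\tfrac12)=J_2(0)=0$. $\mathsf{BCA}=ISP(\mathbf{WK}^e)$ and $V(\mathsf{BCA})=HSP(\mathbf{WK}^e)$. $\mathsf{BA}$ is the subvariety of $V(\mathsf{BCA})$ axiomatised relative to it by $J_2x\approx x$. $\mathsf{SL}$ is the subvariety axiomatised relative to it by $J_2x\approx1$. *)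

theory Defs
  imports Main
begin

record 'a alg =
  carrier :: "'a set"
  meet :: "'a \<Rightarrow> 'a \<Rightarrow> 'a"
  join :: "'a \<Rightarrow> 'a \<Rightarrow> 'a"
  neg :: "'a \<Rightarrow> 'a"
  jtwo :: "'a \<Rightarrow> 'a"
  zero :: 'a
  one :: 'a

definition is_alg :: "'a alg \<Rightarrow> bool" where
  "is_alg A \<longleftrightarrow>
     (\<forall>x\<in>carrier A. \<forall>y\<in>carrier A. meet A x y \<in> carrier A \<and> join A x y \<in> carrier A) \<and>
     (\<forall>x\<in>carrier A. neg A x \<in> carrier A \<and> jtwo A x \<in> carrier A) \<and>
     zero A \<in> carrier A \<and> one A \<in> carrier A"

datatype trm = Var nat | Meet trm trm | Join trm trm | Neg trm | J2 trm | Zero | One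

primrec eval :: "'a alg \<Rightarrow> (nat \<Rightarrow> 'a) \<Rightarrow> trm \<Rightarrow> 'a" where
  "eval A \<rho> (Var n) = \<rho> n"
| "eval A \<rho> (Meet s t) = meet A (eval A \<rho> s) (eval A \<rho> t)"
| "eval A \<rho> (Join s t) = join A (eval A \<rho> s) (eval A \<rho> t)"
| "eval A \<rho> (Neg s) = neg A (eval A \<rho> s)"
| "eval A \<rho> (J2 s) = jtwo A (eval A \<rho> s)"
| "eval A \<rho> Zero = zero A"
| "eval A \<rho> One = one A"

definition sat :: "'a alg \<Rightarrow> trm \<Rightarrow> trm \<Rightarrow> bool" where
  "sat A s t \<longleftrightarrow> (\<forall>\<rho>. (\<forall>n. \<rho> n \<in> carrier A) \<longrightarrow> eval A \<rho> s = eval A \<rho> t)"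

datatype wk = W0 | Wh | W1

fun wk_neg :: "wk \<Rightarrow> wk" where
  "wk_neg W0 = W1" | "wk_neg Wh = Wh" | "wk_neg W1 = W0"

fun wk_meet :: "wk \<Rightarrow> wk \<Rightarrow> wk" where
  "wk_meet Wh _ = Wh" | "wk_meet _ Wh = Wh"
| "wk_meet W1 W1 = W1" | "wk_meet _ _ = W0"

fun wk_join :: "wk \<Rightarrow> wk \<Rightarrow> wk" where
  "wk_join Wh _ = Wh" | "wk_join _ Wh = Wh"
| "wk_join W0 W0 = W0" | "wk_join _ _ = W1"

fun wk_J2 :: "wk \<Rightarrow> wk" where
  "wk_J2 W1 = W1" | "wk_J2 _ = W0"

definition WKe :: "wk alg" where
  "WKe = \<lparr>carrier = UNIV, meet = wk_meet, join = wk_join, neg = wk_neg,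
          jtwo = wk_J2, zero = W0, one = W1\<rparr>"

text \<open>V(BCA) = HSP(WK^e), presented (Birkhoff) as the class of algebras
  satisfying every identity valid in WK^e.\<close>
definition VBCA :: "'a alg \<Rightarrow> bool" where
  "VBCA A \<longleftrightarrow> is_alg A \<and> (\<forall>s t. sat WKe s t \<longrightarrow> sat A s t)"

definition BA :: "'a alg \<Rightarrow> bool" where
  "BA A \<longleftrightarrow> VBCA A \<and> sat A (J2 (Var 0)) (Var 0)"

definition SL :: "'a alg \<Rightarrow> bool" where
  "SL A \<longleftrightarrow> VBCA A \<and> sat A (J2 (Var 0)) One"

definition Vnegfix :: "'a alg \<Rightarrow> bool" where
  "Vnegfix A \<longleftrightarrow> VBCA A \<and> sat A (J2 (Neg (Var 0))) (Neg (J2 (Var 0)))"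

definition prod_alg :: "'b alg \<Rightarrow> 'c alg \<Rightarrow> ('b \<times> 'c) alg" where
  "prod_alg B C = \<lparr>carrier = carrier B \<times> carrier C,
     meet = (\<lambda>(b,c) (b',c'). (meet B b b', meet C c c')),
     join = (\<lambda>(b,c) (b',c'). (join B b b', join C c c')),
     neg = (\<lambda>(b,c). (neg B b, neg C c)),
     jtwo = (\<lambda>(b,c). (jtwo B b, jtwo C c)),
     zero = (zero B, zero C), one = (one B, one C)\<rparr>"

definition hom :: "'a alg \<Rightarrow> 'b alg \<Rightarrow> ('a \<Rightarrow> 'b) \<Rightarrow> bool" where
  "hom A B f \<longleftrightarrow> f ` carrier A \<subseteq> carrier B \<and>
     (\<forall>x\<in>carrier A. \<forall>y\<in>carrier A.
        f (meet A x y) = meet B (f x) (f y) \<and> f (join A x y) = join B (f x) (f y)) \<and>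
     (\<forall>x\<in>carrier A. f (neg A x) = neg B (f x) \<and> f (jtwo A x) = jtwo B (f x)) \<and>
     f (zero A) = zero B \<and> f (one A) = one B"

definition embedding :: "'a alg \<Rightarrow> 'b alg \<Rightarrow> ('a \<Rightarrow> 'b) \<Rightarrow> bool" where
  "embedding A B f \<longleftrightarrow> hom A B f \<and> inj_on f (carrier A)"

end

theory Submission
  imports Defs
begin

text \<open>In V(BCA) the map J2 preserves meets and the constants; once it commutes with
  negation it also preserves joins, because WK^e satisfies
  J2 (x \<or> y) = (J2 x \<or> J2 y) \<and> (J2 x \<or> J2 (neg x)) \<and> (J2 y \<or> J2 (neg y)).
  Its image is then a Boolean algebra. The map x \<mapsto> x \<and> 0 is a homomorphism onto
  an algebra in which J2 is constantly 0, which is also its top. Since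
  x = J2 x \<or> (x \<and> 0) holds in WK^e, the pair of maps is injective.\<close>

lemma eval_closed:
  assumes "is_alg A" "\<forall>n. \<rho> n \<in> carrier A"
  shows "eval A \<rho> t \<in> carrier A"
  using assms by (induction t) (auto simp: is_alg_def)

lemma hom_eval:
  assumes "hom A B f" "is_alg A" "\<forall>n. \<rho> n \<in> carrier A"
  shows "f (eval A \<rho> t) = eval B (f \<circ> \<rho>) t"
  using assms by (induction t) (auto simp: hom_def eval_closed)

lemma sat_hom_image:
  assumes f: "hom A B f" "f ` carrier A = carrier B" and A: "is_alg A" "sat A s t"
  shows "sat B s t"
  unfolding sat_def
proof (intro allI impI)
  fix \<rho> :: "nat \<Rightarrow> 'b" assume \<rho>: "\<forall>n. \<rho> n \<in> carrier B"
  define \<sigma> where "\<sigma> n = inv_into (carrier A) f (\<rho> n)" for n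
  have \<sigma>: "\<forall>n. \<sigma> n \<in> carrier A"
    using \<rho> f(2) by (auto simp: \<sigma>_def inv_into_into)
  have "f \<circ> \<sigma> = \<rho>"
    using \<rho> f(2) by (auto simp: \<sigma>_def f_inv_into_f)
  moreover have "eval A \<sigma> s = eval A \<sigma> t"
    using A(2) \<sigma> by (simp add: sat_def)
  ultimately show "eval B \<rho> s = eval B \<rho> t"
    using hom_eval[OF f(1) A(1) \<sigma>] by metis
qed

lemma is_alg_hom_image:
  assumes f: "hom A B f" "f ` carrier A = carrier B" and A: "is_alg A"
  shows "is_alg B"
proof -
  have "f a \<in> carrier B" if "a \<in> carrier A" for a
    using that f(2) by blast
  then show ?thesis
    using f A unfolding hom_def is_alg_def
    by (smt (verit) imageE)
qed

lemma VBCA_hom_image: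
  assumes "hom A B f" "f ` carrier A = carrier B" "VBCA A"
  shows "VBCA B"
  using assms(3) is_alg_hom_image[OF assms(1,2)] sat_hom_image[OF assms(1,2)]
  unfolding VBCA_def by simp

lemma hom_prod_alg:
  assumes "hom A B f" "hom A C g"
  shows "hom A (prod_alg B C) (\<lambda>x. (f x, g x))"
  using assms unfolding hom_def prod_alg_def by auto

lemma VBCA_identity_at:
  assumes "VBCA A" "sat WKe s t" "x \<in> carrier A" "y \<in> carrier A"
  shows "eval A (\<lambda>n. if n = 0 then x else y) s = eval A (\<lambda>n. if n = 0 then x else y) t"
  using assms unfolding VBCA_def sat_def by simp

lemma
  shows WKe_J2_meet: "sat WKe (J2 (Meet (Var 0) (Var 1))) (Meet (J2 (Var 0)) (J2 (Var 1)))"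
    and WKe_J2_join: "sat WKe (J2 (Join (Var 0) (Var 1)))
      (Meet (Join (J2 (Var 0)) (J2 (Var 1)))
        (Meet (Join (J2 (Var 0)) (J2 (Neg (Var 0)))) (Join (J2 (Var 1)) (J2 (Neg (Var 1))))))"
    and WKe_J2_excluded_middle: "sat WKe
      (Meet (Join (J2 (Var 0)) (J2 (Var 1)))
        (Meet (Join (J2 (Var 0)) (Neg (J2 (Var 0)))) (Join (J2 (Var 1)) (Neg (J2 (Var 1))))))
      (Join (J2 (Var 0)) (J2 (Var 1)))"
    and WKe_J2_zero: "sat WKe (J2 Zero) Zero"
    and WKe_J2_one: "sat WKe (J2 One) One"
    and WKe_J2_idem: "sat WKe (J2 (J2 (Var 0))) (J2 (Var 0))"
    and WKe_meet_zero_meet: "sat WKe (Meet (Meet (Var 0) (Var 1)) Zero)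
      (Meet (Meet (Var 0) Zero) (Meet (Var 1) Zero))"
    and WKe_meet_zero_join: "sat WKe (Meet (Join (Var 0) (Var 1)) Zero)
      (Meet (Meet (Var 0) Zero) (Meet (Var 1) Zero))"
    and WKe_meet_zero_neg: "sat WKe (Meet (Neg (Var 0)) Zero) (Meet (Var 0) Zero)"
    and WKe_meet_zero_J2: "sat WKe (Meet (J2 (Var 0)) Zero) Zero"
    and WKe_meet_zero_zero: "sat WKe (Meet Zero Zero) Zero"
    and WKe_meet_zero_one: "sat WKe (Meet One Zero) Zero"
    and WKe_J2_join_meet_zero: "sat WKe (Var 0) (Join (J2 (Var 0)) (Meet (Var 0) Zero))"
  unfolding sat_def
  by (intro allI impI; case_tac "\<rho> 0"; case_tac "\<rho> 1"; simp add: WKe_def)+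

definition J2_image :: "'a alg \<Rightarrow> 'a alg" where
  "J2_image A = A\<lparr>carrier := jtwo A ` carrier A\<rparr>"

text \<open>The operations are those induced by x \<mapsto> x \<and> 0, which identifies join
  with meet and collapses negation, J2 and both constants.\<close>
definition meet_zero_image :: "'a alg \<Rightarrow> 'a alg" where
  "meet_zero_image A = \<lparr>carrier = (\<lambda>x. meet A x (zero A)) ` carrier A,
     meet = meet A, join = meet A, neg = id, jtwo = (\<lambda>_. zero A),
     zero = zero A, one = zero A\<rparr>"

lemma hom_J2_image:
  assumes A: "VBCA A" and J2_neg: "\<And>x. x \<in> carrier A \<Longrightarrow> jtwo A (neg A x) = neg A (jtwo A x)"
  shows "hom A (J2_image A) (jtwo A)"
  unfolding hom_def J2_image_def
proof (simp, intro conjI ballI)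
  fix x y assume xy: "x \<in> carrier A" "y \<in> carrier A"
  show "jtwo A (meet A x y) = meet A (jtwo A x) (jtwo A y)"
    using VBCA_identity_at[OF A WKe_J2_meet xy] by simp
  have "neg A x \<in> carrier A" "neg A y \<in> carrier A"
    using A xy by (auto simp: VBCA_def is_alg_def)
  then show "jtwo A (join A x y) = join A (jtwo A x) (jtwo A y)"
    using VBCA_identity_at[OF A WKe_J2_join xy] VBCA_identity_at[OF A WKe_J2_excluded_middle xy]
      J2_neg xy by simp
next
  have "zero A \<in> carrier A" using A by (simp add: VBCA_def is_alg_def)
  then show "jtwo A (zero A) = zero A" "jtwo A (one A) = one A"
    using VBCA_identity_at[OF A WKe_J2_zero] VBCA_identity_at[OF A WKe_J2_one] by simp_all
qed (rule J2_neg)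

lemma hom_meet_zero_image:
  assumes A: "VBCA A"
  shows "hom A (meet_zero_image A) (\<lambda>x. meet A x (zero A))"
  unfolding hom_def meet_zero_image_def
proof (simp, intro conjI ballI)
  fix x y assume xy: "x \<in> carrier A" "y \<in> carrier A"
  show "meet A (meet A x y) (zero A) = meet A (meet A x (zero A)) (meet A y (zero A))"
    using VBCA_identity_at[OF A WKe_meet_zero_meet xy] by simp
  show "meet A (join A x y) (zero A) = meet A (meet A x (zero A)) (meet A y (zero A))"
    using VBCA_identity_at[OF A WKe_meet_zero_join xy] by simp
next
  fix x assume "x \<in> carrier A"
  then show "meet A (neg A x) (zero A) = meet A x (zero A)"
    "meet A (jtwo A x) (zero A) = zero A"
    using VBCA_identity_at[OF A WKe_meet_zero_neg] VBCA_identity_at[OF A WKe_meet_zero_J2]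
    by simp_all
next
  have "zero A \<in> carrier A" using A by (simp add: VBCA_def is_alg_def)
  then show "meet A (zero A) (zero A) = zero A" "meet A (one A) (zero A) = zero A"
    using VBCA_identity_at[OF A WKe_meet_zero_zero] VBCA_identity_at[OF A WKe_meet_zero_one]
    by simp_all
qed

lemma BA_J2_image:
  assumes A: "VBCA A" and J2_neg: "\<And>x. x \<in> carrier A \<Longrightarrow> jtwo A (neg A x) = neg A (jtwo A x)"
  shows "BA (J2_image A)"
  unfolding BA_def
proof
  show "VBCA (J2_image A)"
    using VBCA_hom_image[OF hom_J2_image[OF A J2_neg] _ A] by (simp add: J2_image_def)
  show "sat (J2_image A) (J2 (Var 0)) (Var 0)"
    unfolding sat_def
  proof (intro allI impI)
    fix \<rho> :: "nat \<Rightarrow> 'a" assume "\<forall>n. \<rho> n \<in> carrier (J2_image A)"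
    then obtain x where "x \<in> carrier A" "\<rho> 0 = jtwo A x"
      by (auto simp: J2_image_def)
    then show "eval (J2_image A) \<rho> (J2 (Var 0)) = eval (J2_image A) \<rho> (Var 0)"
      using VBCA_identity_at[OF A WKe_J2_idem] by (simp add: J2_image_def)
  qed
qed

lemma SL_meet_zero_image:
  assumes "VBCA A"
  shows "SL (meet_zero_image A)"
  using VBCA_hom_image[OF hom_meet_zero_image[OF assms] _ assms]
  by (simp add: SL_def sat_def meet_zero_image_def)

lemma J2_join_meet_zero:
  assumes "VBCA A" "x \<in> carrier A"
  shows "join A (jtwo A x) (meet A x (zero A)) = x"
  using VBCA_identity_at[OF assms(1) WKe_J2_join_meet_zero assms(2,2)] by simp

lemma inj_on_J2_meet_zero:
  assumes "VBCA A"
  shows "inj_on (\<lambda>x. (jtwo A x, meet A x (zero A))) (carrier A)"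
  by (rule inj_on_inverseI[where g = "\<lambda>(b, c). join A b c"])
    (simp add: J2_join_meet_zero[OF assms])

theorem theorem4p13:
  fixes A :: "'a alg"
  assumes "Vnegfix A"
  shows "\<exists>(B :: 'a alg) (C :: 'a alg) f.
           BA B \<and> SL C \<and> embedding A (prod_alg B C) f"
proof -
  have A: "VBCA A" and "sat A (J2 (Neg (Var 0))) (Neg (J2 (Var 0)))"
    using assms by (simp_all add: Vnegfix_def)
  then have J2_neg: "jtwo A (neg A x) = neg A (jtwo A x)" if "x \<in> carrier A" for x
    using that unfolding sat_def by (auto dest: spec[of _ "\<lambda>_. x"])
  have "embedding A (prod_alg (J2_image A) (meet_zero_image A))
      (\<lambda>x. (jtwo A x, meet A x (zero A)))"
    unfolding embedding_def
    using hom_prod_alg[OF hom_J2_image[OF A J2_neg] hom_meet_zero_image[OF A]]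
      inj_on_J2_meet_zero[OF A] by blast
  then show ?thesis
    using BA_J2_image[OF A J2_neg] SL_meet_zero_image[OF A] by blast
qed

end
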